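(* Let $\boldsymbol{\mu}=(\mu_s)_{s\ge1}$ be a fixed probability distribution on $\{1,2,\dots\}$ with $\mu_1>0$ and $\sum_{s=1}^\infty s\mu_s<\infty$, and for each $n\ge1$ let $\Pi_n\sim ESC_{[n]}(\boldsymbol{\mu})$ with $K_n$ its number of clusters. Then, as $n\to\infty$, $$\frac{K_n}{n}\xrightarrow{p}\Big(\sum_{s=1}^\infty s\mu_s\Big)^{-1}.$$
   Context: For a fixed distribution $\boldsymbol{\mu}$ on the positive integers with $\mu_1>0$, $ESC_{[n]}(\boldsymbol{\mu})$ is the law of the following random partition of $[n]=\{1,\dots,n\}$: let $S_1,S_2,\dots$ be i.i.d. with law $\boldsymbol{\mu}$, condition on the event $E_n$ that $\sum_{j=1}^k S_j=n$ for some $k\in\mathbb{N}$, let $K$ be that unique $k$, and let $(z_1,\dots,z_n)$ be a uniformly random permutation of the vector with $S_1$ copies of $1$, ..., $S_K$ copies of $K$; the partition has blocks $\{i:z_i=j\}$, $j=1,\dots,K$ (so it has $K$ clusters of sizes $S_1,\dots,S_K$). $\xrightarrow{p}$ denotes convergence in probability. *)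

theory Defs
  imports "HOL-Probability.Probability" "HOL-Combinatorics.Permutations"
begin

text \<open>Compositions of n: finite sequences (s_1,...,s_k) of positive integers summing to n.
  These are exactly the possible values of (S_1,...,S_K) on the event E_n.\<close>
definition compositions :: "nat \<Rightarrow> nat list set" where
  "compositions n = {xs. (\<forall>x\<in>set xs. 0 < x) \<and> sum_list xs = n}"

text \<open>P(K = k, S_1 = s_1, ..., S_k = s_k) for i.i.d. S_j with law mu.\<close>
definition comp_weight :: "nat pmf \<Rightarrow> nat list \<Rightarrow> real" where
  "comp_weight \<mu> xs = prod_list (map (pmf \<mu>) xs)"

text \<open>Law of (S_1,...,S_K) conditioned on E_n: weights normalized by P(E_n).\<close>
definition ESC_sizes :: "nat pmf \<Rightarrow> nat \<Rightarrow> nat list pmf" where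
  "ESC_sizes \<mu> n = embed_pmf (\<lambda>xs. if xs \<in> compositions n
      then comp_weight \<mu> xs / (\<Sum>ys\<in>compositions n. comp_weight \<mu> ys) else 0)"

definition label_vector :: "nat list \<Rightarrow> nat list" where
  "label_vector xs = concat (map (\<lambda>j. replicate (xs ! j) (Suc j)) [0..<length xs])"

definition ESC :: "nat pmf \<Rightarrow> nat \<Rightarrow> nat set set pmf" where
  "ESC \<mu> n = do {
     xs \<leftarrow> ESC_sizes \<mu> n;
     \<sigma> \<leftarrow> pmf_of_set {\<sigma>. \<sigma> permutes {1..n}};
     return_pmf {{i \<in> {1..n}. label_vector xs ! (\<sigma> i - 1) = j} | j. j \<in> {1..length xs}}
   }"

end

theory Submission
  imports Defs
begin

text \<open>
  Let \<open>u n = composition_sum (pmf \<mu>) n\<close> be the probability of \<open>E\<^sub>n\<close>. Given \<open>E\<^sub>n\<close>, the cluster sizes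
  form a composition \<open>(s\<^sub>1, \<dots>, s\<^sub>k)\<close> of \<open>n\<close> with probability \<open>\<mu> s\<^sub>1 \<cdots> \<mu> s\<^sub>k / u n\<close>. So it suffices
  that \<open>u n\<close> stays away from \<open>0\<close> and that the unnormalised weight of the compositions with at
  least \<open>(1 + \<delta>) n / m\<close> or at most \<open>(1 - \<delta>) n / m\<close> parts tends to \<open>0\<close>, \<open>m\<close> being the mean.

  The renewal identity \<open>\<Sum>j\<le>n. u j * r (n - j) = 1\<close>, where the tails \<open>r i = \<mu> {i<..}\<close> are summable
  because \<open>m < \<infinity>\<close>, forces \<open>u (n - i) \<ge> 1 / (2 (L + 1))\<close> for some \<open>i \<le> L\<close>; and \<open>u n \<ge> \<mu> 1 ^ i * u (n - i)\<close>.

  Both weight bounds are Chernoff bounds: if \<open>\<Sum>x. \<mu> x * exp (f x) \<le> 1\<close>, every composition sum of the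
  tilted weights \<open>\<mu> x * exp (f x)\<close> is at most \<open>1\<close>. Many parts are excluded with \<open>f x = a - s x\<close>. For
  few parts only a finite mean is available, so the sizes are truncated at a level \<open>M\<close>, and the
  compositions carrying a fixed fraction of \<open>n\<close> in parts of size at least \<open>M\<close> are excluded by a
  first-moment bound instead.
\<close>

section \<open>Compositions and the renewal sequence\<close>

definition composition_sum :: "(nat \<Rightarrow> real) \<Rightarrow> nat \<Rightarrow> real" where
  "composition_sum p n = (\<Sum>xs\<in>compositions n. prod_list (map p xs))"

lemma length_le_sum_list_pos: "\<forall>x\<in>set xs. 0 < (x::nat) \<Longrightarrow> length xs \<le> sum_list xs"
  by (induction xs) auto

lemma finite_compositions: "finite (compositions n)"
proof (rule finite_subset)
  show "compositions n \<subseteq> {xs. set xs \<subseteq> {0..n} \<and> length xs \<le> n}"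
    using length_le_sum_list_pos member_le_sum_list by (fastforce simp: compositions_def)
  show "finite {xs. set xs \<subseteq> {0..n::nat} \<and> length xs \<le> n}"
    by (rule finite_lists_length_le) auto
qed

lemma compositions_0: "compositions 0 = {[]}"
  by (auto simp: compositions_def) (metis last_in_set less_not_refl)

lemma compositions_eq_UN_Cons:
  assumes "0 < n"
  shows "compositions n = (\<Union>s\<in>{1..n}. (#) s ` compositions (n - s))"
proof (intro equalityI subsetI)
  fix xs assume xs: "xs \<in> compositions n"
  with assms obtain s ys where "xs = s # ys"
    by (cases xs) (auto simp: compositions_def)
  with xs show "xs \<in> (\<Union>s\<in>{1..n}. (#) s ` compositions (n - s))"
    by (auto simp: compositions_def intro!: bexI[of _ s])
qed (auto simp: compositions_def)

lemma composition_sum_0 [simp]: "composition_sum p 0 = 1"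
  by (simp add: composition_sum_def compositions_0)

lemma composition_sum_rec:
  assumes "0 < n"
  shows "composition_sum p n = (\<Sum>s=1..n. p s * composition_sum p (n - s))"
proof -
  have "composition_sum p n = (\<Sum>s=1..n. \<Sum>xs\<in>(#) s ` compositions (n - s). prod_list (map p xs))"
    unfolding composition_sum_def compositions_eq_UN_Cons[OF assms]
    by (rule sum.UNION_disjoint) (auto simp: finite_compositions)
  also have "\<dots> = (\<Sum>s=1..n. p s * composition_sum p (n - s))"
    by (rule sum.cong) (auto simp: sum.reindex composition_sum_def sum_distrib_left)
  finally show ?thesis .
qed

lemma composition_sum_nonneg: "(\<And>x. 0 \<le> p x) \<Longrightarrow> 0 \<le> composition_sum p n"
  unfolding composition_sum_def by (intro sum_nonneg prod_list_nonneg) auto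

lemma composition_sum_le_power:
  assumes p: "\<And>x. 0 \<le> p x"
  shows "composition_sum p n \<le> max 1 (\<Sum>s=1..n. p s) ^ n"
proof (induction n rule: less_induct)
  case (less n)
  show ?case
  proof (cases "n = 0")
    case False
    let ?G = "max 1 (\<Sum>s=1..n. p s)"
    have "composition_sum p n = (\<Sum>s=1..n. p s * composition_sum p (n - s))"
      using False composition_sum_rec by blast
    also have "\<dots> \<le> (\<Sum>s=1..n. p s * ?G ^ (n - 1))"
    proof (intro sum_mono mult_left_mono p)
      fix s assume s: "s \<in> {1..n}"
      have "composition_sum p (n - s) \<le> max 1 (\<Sum>s=1..n-s. p s) ^ (n - s)"
        using less s by simp
      also have "\<dots> \<le> ?G ^ (n - s)"
        by (intro power_mono max.mono sum_mono2) (auto simp: p)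
      also have "\<dots> \<le> ?G ^ (n - 1)"
        using s by (intro power_increasing) auto
      finally show "composition_sum p (n - s) \<le> ?G ^ (n - 1)" .
    qed
    also have "\<dots> \<le> ?G * ?G ^ (n - 1)"
      by (simp add: sum_distrib_right[symmetric] mult_right_mono)
    also have "\<dots> = ?G ^ n"
      using False by (simp add: power_eq_if)
    finally show ?thesis .
  qed simp
qed

lemma composition_sum_le_1:
  "(\<And>x. 0 \<le> p x) \<Longrightarrow> (\<Sum>s=1..n. p s) \<le> 1 \<Longrightarrow> composition_sum p n \<le> 1"
  using composition_sum_le_power[of p n] by simp

lemma composition_sum_le_exp:
  assumes p: "\<And>x. 0 \<le> p x" and mass: "(\<Sum>s=1..n. p s) \<le> 1 + a / real n" and "0 \<le> a" "0 < n"
  shows "composition_sum p n \<le> exp a"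
proof -
  have "max 1 (\<Sum>s=1..n. p s) \<le> 1 + a / real n"
    using mass assms by simp
  then have "composition_sum p n \<le> (1 + a / real n) ^ n"
    using composition_sum_le_power[OF p, where n=n] by (meson max.cobounded1 order_trans power_mono zero_le_one)
  also have "\<dots> \<le> exp a"
    using exp_ge_one_plus_x_over_n_power_n[of n a] assms by simp
  finally show ?thesis .
qed

lemma composition_sum_Suc_ge:
  assumes "\<And>x. 0 \<le> p x"
  shows "p 1 * composition_sum p k \<le> composition_sum p (Suc k)"
proof -
  have "p 1 * composition_sum p k = (\<Sum>s\<in>{1}. p s * composition_sum p (Suc k - s))"
    by simp
  also have "\<dots> \<le> (\<Sum>s=1..Suc k. p s * composition_sum p (Suc k - s))"
    using assms by (intro sum_mono2) (auto intro: mult_nonneg_nonneg composition_sum_nonneg)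
  finally show ?thesis
    using composition_sum_rec[of "Suc k" p] by simp
qed

lemma composition_sum_shift_ge:
  assumes "\<And>x. 0 \<le> p x"
  shows "p 1 ^ i * composition_sum p k \<le> composition_sum p (k + i)"
proof (induction i)
  case (Suc i)
  have "p 1 ^ Suc i * composition_sum p k \<le> p 1 * composition_sum p (k + i)"
    using Suc assms by (simp add: mult.assoc mult_left_mono)
  also have "\<dots> \<le> composition_sum p (k + Suc i)"
    using composition_sum_Suc_ge[OF assms] by simp
  finally show ?case .
qed simp

lemma composition_sum_renewal:
  "(\<Sum>j\<le>n. composition_sum p j * (1 - (\<Sum>x=1..n-j. p x))) = 1"
proof (induction n)
  case (Suc n)
  have "(\<Sum>j\<le>n. composition_sum p j * p (Suc n - j))
      = (\<Sum>s=1..Suc n. p s * composition_sum p (Suc n - s))"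
    by (rule sum.reindex_bij_witness[where i="\<lambda>s. Suc n - s" and j="\<lambda>j. Suc n - j"]) auto
  also have "\<dots> = composition_sum p (Suc n)"
    by (simp add: composition_sum_rec)
  finally have conv: "(\<Sum>j\<le>n. composition_sum p j * p (Suc n - j)) = composition_sum p (Suc n)" .
  have "(\<Sum>j\<le>n. composition_sum p j * (1 - (\<Sum>x=1..Suc n-j. p x)))
      = (\<Sum>j\<le>n. composition_sum p j * (1 - (\<Sum>x=1..n-j. p x)) - composition_sum p j * p (Suc n - j))"
    by (intro sum.cong) (auto simp: Suc_diff_le algebra_simps)
  then have "(\<Sum>j\<le>Suc n. composition_sum p j * (1 - (\<Sum>x=1..Suc n-j. p x)))
      = composition_sum p (Suc n) + (\<Sum>j\<le>n. composition_sum p j * (1 - (\<Sum>x=1..n-j. p x)))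
          - (\<Sum>j\<le>n. composition_sum p j * p (Suc n - j))"
    by (simp add: sum_subtractf)
  then show ?case
    using Suc conv by simp
qed simp

lemma composition_sum_window_ge:
  assumes p: "\<And>x. 0 \<le> p x" and mass: "\<And>n. (\<Sum>x=1..n. p x) \<le> 1" and "L \<le> n"
    and tail: "(\<Sum>i\<in>{L<..n}. 1 - (\<Sum>x=1..i. p x)) \<le> 1/2"
  shows "1/2 \<le> (\<Sum>i\<le>L. composition_sum p (n - i))"
proof -
  define r where "r i = 1 - (\<Sum>x=1..i. p x)" for i
  have r: "0 \<le> r i" "r i \<le> 1" for i
    using mass p by (auto simp: r_def sum_nonneg)
  have u: "0 \<le> composition_sum p k" "composition_sum p k \<le> 1" for k
    using p mass by (auto intro: composition_sum_nonneg composition_sum_le_1)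
  have "1 = (\<Sum>j\<le>n. composition_sum p j * r (n - j))"
    unfolding r_def by (rule composition_sum_renewal[symmetric])
  also have "\<dots> = (\<Sum>i\<le>n. composition_sum p (n - i) * r i)"
    by (rule sum.reindex_bij_witness[where i="\<lambda>i. n - i" and j="\<lambda>j. n - j"]) auto
  also have "\<dots> = (\<Sum>i\<le>L. composition_sum p (n - i) * r i) + (\<Sum>i\<in>{L<..n}. composition_sum p (n - i) * r i)"
    using \<open>L \<le> n\<close> by (subst sum.union_disjoint[symmetric]) (auto intro: sum.cong)
  also have "\<dots> \<le> (\<Sum>i\<le>L. composition_sum p (n - i)) + (\<Sum>i\<in>{L<..n}. r i)"
    using r u by (intro add_mono sum_mono) (auto intro: mult_left_le mult_left_le_one_le)
  finally show ?thesis
    using tail unfolding r_def by simp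
qed

lemma summable_imp_tail_sums_le:
  fixes f :: "nat \<Rightarrow> real"
  assumes "summable f" "0 < e"
  obtains L where "\<And>n. (\<Sum>i\<in>{L<..n}. f i) \<le> e"
proof -
  have "\<exists>N. \<forall>m\<ge>N. \<forall>n. norm (\<Sum>i\<in>{m..<n}. f i) < e"
    using assms unfolding summable_Cauchy by blast
  then obtain N where N: "\<And>n. norm (\<Sum>i\<in>{Suc N..<n}. f i) < e"
    by (meson le_SucI order_refl)
  show thesis
  proof (rule that)
    fix n
    have "{N<..n} = {Suc N..<Suc n}"
      by auto
    then show "(\<Sum>i\<in>{N<..n}. f i) \<le> e"
      using N[of "Suc n"] by simp
  qed
qed

lemma composition_sum_lower_bound:
  fixes p :: "nat \<Rightarrow> real"
  assumes p: "\<And>x. 0 \<le> p x" and mass: "\<And>n. (\<Sum>x=1..n. p x) \<le> 1" and p1: "0 < p 1"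
    and tails: "summable (\<lambda>i. 1 - (\<Sum>x=1..i. p x))"
  obtains c where "0 < c" "\<And>n. c \<le> composition_sum p n"
proof -
  obtain L where L: "\<And>n. (\<Sum>i\<in>{L<..n}. 1 - (\<Sum>x=1..i. p x)) \<le> 1/2"
    using summable_imp_tail_sums_le[OF tails, of "1/2"] by auto
  define c where "c = p 1 ^ L / (2 * (real L + 1))"
  have p1_le: "p 1 \<le> 1"
    using mass[of 1] by simp
  have "c \<le> composition_sum p n" for n
  proof (cases "L \<le> n")
    case True
    obtain i where i: "i \<le> L" "1 / (2 * (real L + 1)) \<le> composition_sum p (n - i)"
    proof (rule ccontr)
      assume "\<not> thesis"
      then have "(\<Sum>i\<le>L. composition_sum p (n - i)) < real (card {..L}) * (1 / (2 * (real L + 1)))"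
        using that by (intro sum_bounded_above_strict) force+
      moreover have "real (card {..L}) * (1 / (2 * (real L + 1))) = 1/2"
        by simp
      ultimately show False
        using composition_sum_window_ge[OF p mass True L] by linarith
    qed
    have "c \<le> p 1 ^ i * (1 / (2 * (real L + 1)))"
      using p1 p1_le i by (simp add: c_def divide_right_mono power_decreasing)
    also have "\<dots> \<le> p 1 ^ i * composition_sum p (n - i)"
      using p1 i by (intro mult_left_mono) auto
    also have "\<dots> \<le> composition_sum p n"
      using composition_sum_shift_ge[OF p, where i=i and k="n - i"] i True by simp
    finally show ?thesis .
  next
    case False
    have "c \<le> p 1 ^ n"
      using p1 p1_le False unfolding c_def
      by (intro order.trans[OF _ power_decreasing[of n L]]) (auto simp: field_simps)
    also have "\<dots> \<le> composition_sum p n"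
      using composition_sum_shift_ge[OF p, where i=n and k=0] by simp
    finally show ?thesis .
  qed
  moreover have "0 < c"
    using p1 by (simp add: c_def)
  ultimately show thesis
    using that by blast
qed

section \<open>Markov and Chernoff bounds for composition sums\<close>

lemma prod_list_map_mult:
  fixes f g :: "'a \<Rightarrow> real"
  shows "prod_list (map (\<lambda>x. f x * g x) xs) = prod_list (map f xs) * prod_list (map g xs)"
  by (induction xs) (auto simp: mult_ac)

lemma exp_sum_list:
  fixes f :: "'a \<Rightarrow> real"
  shows "exp (sum_list (map f xs)) = prod_list (map (\<lambda>x. exp (f x)) xs)"
  by (induction xs) (auto simp: exp_add)

lemma sum_list_map_affine:
  fixes g :: "'a \<Rightarrow> real"
  shows "sum_list (map (\<lambda>x. c * g x + a) xs) = c * sum_list (map g xs) + real (length xs) * a"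
  by (induction xs) (auto simp: algebra_simps)

lemma one_plus_sum_list_le_prod_list:
  fixes f :: "'a \<Rightarrow> real"
  assumes "\<And>x. 0 \<le> f x"
  shows "1 + sum_list (map f xs) \<le> prod_list (map (\<lambda>x. 1 + f x) xs)"
proof (induction xs)
  case (Cons y ys)
  have "0 \<le> sum_list (map f ys)"
    using assms by (induction ys) (auto intro: add_nonneg_nonneg)
  then have "1 + sum_list (map f (y # ys)) \<le> (1 + f y) * (1 + sum_list (map f ys))"
    using assms[of y] by (simp add: algebra_simps)
  also have "\<dots> \<le> (1 + f y) * prod_list (map (\<lambda>x. 1 + f x) ys)"
    using Cons assms[of y] by (intro mult_left_mono) auto
  finally show ?case by simp
qed simp

lemma composition_sum_markov:
  assumes p: "\<And>x. 0 \<le> p x" and \<phi>: "\<And>x. 0 \<le> \<phi> x" and t: "0 < t"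
    and Q: "\<And>xs. xs \<in> compositions n \<Longrightarrow> Q xs \<Longrightarrow> t \<le> prod_list (map \<phi> xs)"
  shows "(\<Sum>xs\<in>{xs\<in>compositions n. Q xs}. prod_list (map p xs))
           \<le> composition_sum (\<lambda>x. p x * \<phi> x) n / t"
proof -
  have "(\<Sum>xs\<in>{xs\<in>compositions n. Q xs}. prod_list (map p xs))
      \<le> (\<Sum>xs\<in>{xs\<in>compositions n. Q xs}. prod_list (map (\<lambda>x. p x * \<phi> x) xs) / t)"
  proof (rule sum_mono)
    fix xs assume xs: "xs \<in> {xs\<in>compositions n. Q xs}"
    have "prod_list (map p xs) * t \<le> prod_list (map p xs) * prod_list (map \<phi> xs)"
      using Q xs p by (intro mult_left_mono prod_list_nonneg) auto
    then show "prod_list (map p xs) \<le> prod_list (map (\<lambda>x. p x * \<phi> x) xs) / t"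
      using t by (simp add: prod_list_map_mult field_simps)
  qed
  also have "\<dots> \<le> (\<Sum>xs\<in>compositions n. prod_list (map (\<lambda>x. p x * \<phi> x) xs) / t)"
    using p \<phi> t by (intro sum_mono2 finite_compositions divide_nonneg_pos prod_list_nonneg)
      (auto intro: mult_nonneg_nonneg)
  finally show ?thesis
    by (simp add: composition_sum_def sum_divide_distrib)
qed

lemma composition_sum_chernoff:
  fixes f :: "nat \<Rightarrow> real"
  assumes p: "\<And>x. 0 \<le> p x" and f: "(\<Sum>x=1..n. p x * exp (f x)) \<le> 1"
    and Q: "\<And>xs. xs \<in> compositions n \<Longrightarrow> Q xs \<Longrightarrow> t \<le> sum_list (map f xs)"
  shows "(\<Sum>xs\<in>{xs\<in>compositions n. Q xs}. prod_list (map p xs)) \<le> exp (- t)"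
proof -
  have "(\<Sum>xs\<in>{xs\<in>compositions n. Q xs}. prod_list (map p xs))
      \<le> composition_sum (\<lambda>x. p x * exp (f x)) n / exp t"
    using p Q by (intro composition_sum_markov) (auto simp: exp_sum_list[symmetric])
  also have "\<dots> \<le> 1 / exp t"
    using p f by (intro divide_right_mono composition_sum_le_1) auto
  finally show ?thesis
    by (simp add: exp_minus inverse_eq_divide)
qed

text \<open>Markov's inequality with the test function \<open>\<Prod> (1 + b x / (\<beta> n))\<close>, whose
  composition sum is at most \<open>(1 + 1/n)\<^sup>n \<le> e\<close>.\<close>

lemma composition_sum_large_parts:
  fixes p b :: "nat \<Rightarrow> real"
  assumes p: "\<And>x. 0 \<le> p x" and mass: "(\<Sum>x=1..n. p x) \<le> 1"
    and b: "\<And>x. 0 \<le> b x" and moment: "(\<Sum>x=1..n. p x * b x) \<le> \<beta>"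
    and "0 < \<beta>" "0 \<le> \<gamma>" "0 < n"
  shows "(\<Sum>xs\<in>{xs\<in>compositions n. \<gamma> * real n \<le> sum_list (map b xs)}. prod_list (map p xs))
           \<le> exp 1 / (1 + \<gamma> / \<beta>)"
proof -
  define \<phi> where "\<phi> x = 1 + b x / (\<beta> * real n)" for x
  have \<phi>: "0 \<le> \<phi> x" for x
    using b \<open>0 < \<beta>\<close> by (simp add: \<phi>_def add_nonneg_nonneg)
  have "(\<Sum>xs\<in>{xs\<in>compositions n. \<gamma> * real n \<le> sum_list (map b xs)}. prod_list (map p xs))
      \<le> composition_sum (\<lambda>x. p x * \<phi> x) n / (1 + \<gamma> / \<beta>)"
  proof (rule composition_sum_markov[OF p \<phi>])
    show "0 < 1 + \<gamma> / \<beta>"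
      using assms by (simp add: add_pos_nonneg)
    fix xs assume "\<gamma> * real n \<le> sum_list (map b xs)"
    then have "\<gamma> / \<beta> \<le> sum_list (map b xs) / (\<beta> * real n)"
      using assms by (simp add: field_simps)
    moreover have "sum_list (map (\<lambda>x. b x / (\<beta> * real n)) xs) = sum_list (map b xs) / (\<beta> * real n)"
      by (induction xs) (auto simp: add_divide_distrib)
    ultimately have "1 + \<gamma> / \<beta> \<le> 1 + sum_list (map (\<lambda>x. b x / (\<beta> * real n)) xs)"
      by simp
    also have "\<dots> \<le> prod_list (map \<phi> xs)"
      unfolding \<phi>_def using b \<open>0 < \<beta>\<close> by (intro one_plus_sum_list_le_prod_list) simp
    finally show "1 + \<gamma> / \<beta> \<le> prod_list (map \<phi> xs)" .
  qed
  also have "\<dots> \<le> exp 1 / (1 + \<gamma> / \<beta>)"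
  proof (intro divide_right_mono composition_sum_le_exp)
    have "(\<Sum>x=1..n. p x * \<phi> x) = (\<Sum>x=1..n. p x) + (\<Sum>x=1..n. p x * b x) / (\<beta> * real n)"
      by (simp add: \<phi>_def algebra_simps sum.distrib sum_divide_distrib)
    also have "\<dots> \<le> 1 + 1 / real n"
      using mass moment assms by (intro add_mono) (auto simp: field_simps)
    finally show "(\<Sum>x=1..n. p x * \<phi> x) \<le> 1 + 1 / real n" .
  qed (use assms \<phi> in \<open>auto intro: mult_nonneg_nonneg add_nonneg_nonneg\<close>)
  finally show ?thesis .
qed

lemma LIMSEQ_exp_neg_mult: "0 < c \<Longrightarrow> (\<lambda>n. exp (- (c * real n))) \<longlonglongrightarrow> 0"
  using LIMSEQ_power_zero[of "exp (- c)"] by (simp add: exp_of_nat_mult[symmetric] mult.commute)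

section \<open>The number of clusters of an ESC partition\<close>

lemma comp_weight_nonneg [simp]: "0 \<le> comp_weight \<mu> xs"
  unfolding comp_weight_def by (intro prod_list_nonneg) auto

lemma sum_comp_weight_compositions:
  "(\<Sum>xs\<in>compositions n. comp_weight \<mu> xs) = composition_sum (pmf \<mu>) n"
  by (simp add: composition_sum_def comp_weight_def)

text \<open>The probability, without conditioning on \<open>E\<^sub>n\<close>, that \<open>(S\<^sub>1, \<dots>, S\<^sub>K)\<close> is a composition of \<open>n\<close>
  with property \<open>Q\<close>.\<close>

definition compositions_weight :: "nat pmf \<Rightarrow> nat \<Rightarrow> (nat list \<Rightarrow> bool) \<Rightarrow> real" where
  "compositions_weight \<mu> n Q = (\<Sum>xs\<in>{xs\<in>compositions n. Q xs}. comp_weight \<mu> xs)"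

lemma compositions_weight_nonneg: "0 \<le> compositions_weight \<mu> n Q"
  unfolding compositions_weight_def by (intro sum_nonneg) simp

lemma compositions_weight_le_add:
  assumes "\<And>xs. xs \<in> compositions n \<Longrightarrow> Q xs \<Longrightarrow> Q\<^sub>1 xs \<or> Q\<^sub>2 xs"
  shows "compositions_weight \<mu> n Q \<le> compositions_weight \<mu> n Q\<^sub>1 + compositions_weight \<mu> n Q\<^sub>2"
proof -
  let ?A = "\<lambda>Q. {xs\<in>compositions n. Q xs}"
  have "compositions_weight \<mu> n Q \<le> (\<Sum>xs\<in>?A Q\<^sub>1 \<union> ?A Q\<^sub>2. comp_weight \<mu> xs)"
    unfolding compositions_weight_def using assms by (intro sum_mono2) (auto simp: finite_compositions)
  also have "\<dots> \<le> compositions_weight \<mu> n Q\<^sub>1 + compositions_weight \<mu> n Q\<^sub>2"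
    unfolding compositions_weight_def by (simp add: sum_Un finite_compositions sum_nonneg)
  finally show ?thesis .
qed

lemma length_label_vector: "length (label_vector xs) = sum_list xs"
  by (simp add: label_vector_def length_concat comp_def map_nth)

lemma in_set_label_vector:
  assumes "\<forall>x\<in>set xs. 0 < x" "j \<in> {1..length xs}"
  shows "j \<in> set (label_vector xs)"
proof -
  have j: "j - 1 < length xs" "Suc (j - 1) = j"
    using assms(2) by auto
  then have "0 < xs ! (j - 1)"
    using assms(1) nth_mem by blast
  then show ?thesis
    unfolding label_vector_def using j by (force simp: set_replicate_conv_if)
qed

lemma card_ESC_blocks:
  assumes xs: "xs \<in> compositions n" and \<sigma>: "\<sigma> permutes {1..n}"
  shows "card {{i \<in> {1..n}. label_vector xs ! (\<sigma> i - 1) = j} | j. j \<in> {1..length xs}} = length xs"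
proof -
  define block where "block j = {i \<in> {1..n}. label_vector xs ! (\<sigma> i - 1) = j}" for j
  have pos: "\<forall>x\<in>set xs. 0 < x" and n: "sum_list xs = n"
    using xs by (auto simp: compositions_def)
  have nonempty: "\<exists>i. i \<in> block j" if j: "j \<in> {1..length xs}" for j
  proof -
    obtain q where q: "q < n" "label_vector xs ! q = j"
      using in_set_label_vector[OF pos j] length_label_vector[of xs] n by (auto simp: in_set_conv_nth)
    have "inv \<sigma> (Suc q) \<in> {1..n}"
      using q permutes_in_image[OF permutes_inv[OF \<sigma>]] by auto
    moreover have "\<sigma> (inv \<sigma> (Suc q)) = Suc q"
      using permutes_inverses(1)[OF \<sigma>] by simp
    ultimately show ?thesis
      using q unfolding block_def by auto
  qed
  have "inj_on block {1..length xs}"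
  proof (rule inj_onI)
    fix j j' assume "j \<in> {1..length xs}" and "block j = block j'"
    then obtain i where "i \<in> block j" "i \<in> block j'"
      using nonempty by blast
    then show "j = j'"
      unfolding block_def by auto
  qed
  moreover have "{{i \<in> {1..n}. label_vector xs ! (\<sigma> i - 1) = j} | j. j \<in> {1..length xs}} = block ` {1..length xs}"
    unfolding block_def by auto
  ultimately show ?thesis
    by (simp add: card_image)
qed

context
  fixes \<mu> :: "nat pmf" and n :: nat
  assumes composition_sum_pos: "0 < composition_sum (pmf \<mu>) n"
begin

lemma pmf_ESC_sizes:
  "pmf (ESC_sizes \<mu> n) xs = (if xs \<in> compositions n then comp_weight \<mu> xs / composition_sum (pmf \<mu>) n else 0)"
proof -
  define f where "f xs = (if xs \<in> compositions n then comp_weight \<mu> xs / composition_sum (pmf \<mu>) n else 0)" for xs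
  have f_nonneg: "0 \<le> f xs" for xs
    using composition_sum_pos by (simp add: f_def)
  have "(\<integral>\<^sup>+xs. ennreal (f xs) \<partial>count_space UNIV) = (\<Sum>xs\<in>compositions n. ennreal (f xs))"
    by (rule nn_integral_count_space') (auto simp: finite_compositions f_def)
  also have "\<dots> = ennreal (\<Sum>xs\<in>compositions n. f xs)"
    using f_nonneg by simp
  also have "(\<Sum>xs\<in>compositions n. f xs) = 1"
    using composition_sum_pos by (simp add: f_def sum_divide_distrib[symmetric] sum_comp_weight_compositions)
  finally have "pmf (embed_pmf f) xs = f xs"
    by (intro pmf_embed_pmf f_nonneg) simp
  moreover have "ESC_sizes \<mu> n = embed_pmf f"
    unfolding ESC_sizes_def f_def[abs_def] sum_comp_weight_compositions ..
  ultimately show ?thesis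
    by (simp add: f_def)
qed

lemma set_pmf_ESC_sizes: "set_pmf (ESC_sizes \<mu> n) \<subseteq> compositions n"
  by (auto simp: set_pmf_iff pmf_ESC_sizes split: if_splits)

lemma map_pmf_card_ESC: "map_pmf card (ESC \<mu> n) = map_pmf length (ESC_sizes \<mu> n)"
proof -
  let ?S = "{\<sigma>. \<sigma> permutes {1..n}}"
  have "finite ?S"
    by (rule finite_permutations) simp
  moreover have "?S \<noteq> {}"
    using permutes_id by blast
  ultimately have "map_pmf card (ESC \<mu> n) = ESC_sizes \<mu> n \<bind> (\<lambda>xs. pmf_of_set ?S \<bind> (\<lambda>\<sigma>. return_pmf (length xs)))"
    unfolding ESC_def map_bind_pmf map_return_pmf
  proof (intro bind_pmf_cong refl)
    fix xs \<sigma> assume "xs \<in> set_pmf (ESC_sizes \<mu> n)" "\<sigma> \<in> set_pmf (pmf_of_set ?S)"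
    with \<open>finite ?S\<close> \<open>?S \<noteq> {}\<close> have "xs \<in> compositions n" "\<sigma> permutes {1..n}"
      using set_pmf_ESC_sizes by auto
    then show "return_pmf (card {{i \<in> {1..n}. label_vector xs ! (\<sigma> i - 1) = j} | j. j \<in> {1..length xs}})
        = return_pmf (length xs)"
      by (simp only: card_ESC_blocks)
  qed
  then show ?thesis
    by (simp add: map_pmf_def)
qed

lemma prob_ESC_card:
  "measure_pmf.prob (ESC \<mu> n) {P. Q (card P)}
     = compositions_weight \<mu> n (\<lambda>xs. Q (length xs)) / composition_sum (pmf \<mu>) n"
proof -
  let ?A = "{xs\<in>compositions n. Q (length xs)}"
  have "measure_pmf.prob (ESC \<mu> n) {P. Q (card P)} = measure_pmf.prob (ESC_sizes \<mu> n) {xs. Q (length xs)}"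
    using arg_cong[OF map_pmf_card_ESC, of "\<lambda>p. measure_pmf.prob p {k. Q k}"] by simp
  also have "\<dots> = measure_pmf.prob (ESC_sizes \<mu> n) ?A"
    using set_pmf_ESC_sizes by (intro measure_eq_AE) (auto simp: AE_measure_pmf_iff)
  also have "\<dots> = (\<Sum>xs\<in>?A. pmf (ESC_sizes \<mu> n) xs)"
    by (simp add: measure_measure_pmf_finite finite_compositions)
  also have "\<dots> = compositions_weight \<mu> n (\<lambda>xs. Q (length xs)) / composition_sum (pmf \<mu>) n"
    by (simp add: pmf_ESC_sizes compositions_weight_def sum_divide_distrib)
  finally show ?thesis .
qed

end

section \<open>Cluster size laws with finite mean\<close>

lemma div_one_plus_le_one_minus_exp:
  fixes y :: real
  assumes "0 \<le> y"
  shows "y / (1 + y) \<le> 1 - exp (- y)"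
proof -
  have "exp (- y) * (1 + y) \<le> exp (- y) * exp y"
    using exp_ge_add_one_self[of y] by (intro mult_left_mono) auto
  then show ?thesis
    using assms by (simp add: exp_minus field_simps)
qed

lemma exp_minus_one_le_mult_exp:
  fixes y :: real
  shows "exp y - 1 \<le> y * exp y"
proof -
  have "exp y * (1 - y) \<le> exp y * exp (- y)"
    using exp_ge_add_one_self[of "- y"] by (intro mult_left_mono) auto
  then show ?thesis
    by (simp add: exp_minus algebra_simps)
qed

lemma sum_pmf_le_1: "finite A \<Longrightarrow> (\<Sum>x\<in>A. pmf p x) \<le> 1"
  using measure_pmf.prob_le_1[of p A] by (simp add: measure_measure_pmf_finite)

lemma far_from_mean_cases:
  fixes k m \<epsilon> :: real
  assumes "0 < m" "0 < n" "\<epsilon> < \<bar>k / n - 1 / m\<bar>"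
  shows "(1 + \<epsilon> * m) * n / m \<le> k \<or> k \<le> (1 - \<epsilon> * m) * n / m"
proof -
  have "\<epsilon> < k / n - 1 / m \<or> \<epsilon> < 1 / m - k / n"
    using assms(3) by linarith
  then have "\<epsilon> * n < (k / n - 1 / m) * n \<or> \<epsilon> * n < (1 / m - k / n) * n"
    using assms(2) mult_strict_right_mono by blast
  moreover have "(k / n - 1 / m) * n = k - n / m" "(1 / m - k / n) * n = n / m - k"
    "(1 + \<epsilon> * m) * n / m = n / m + \<epsilon> * n" "(1 - \<epsilon> * m) * n / m = n / m - \<epsilon> * n"
    using assms by (simp_all add: field_simps)
  ultimately show ?thesis
    by argo
qed

locale cluster_size_law =
  fixes \<mu> :: "nat pmf"
  assumes no_zero: "0 \<notin> set_pmf \<mu>"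
    and pmf_1_pos: "0 < pmf \<mu> 1"
    and integrable_size: "integrable (measure_pmf \<mu>) real"
begin

abbreviation mean :: real where
  "mean \<equiv> measure_pmf.expectation \<mu> real"

lemma pmf_0 [simp]: "pmf \<mu> 0 = 0"
  using no_zero by (simp add: set_pmf_iff)

lemma mean_sums: "(\<lambda>x. pmf \<mu> x * real x) sums mean"
proof -
  have "integrable (count_space UNIV) (\<lambda>x. pmf \<mu> x * real x)"
    using integrable_size unfolding measure_pmf_eq_density by (subst (asm) integrable_density) auto
  from sums_integral_count_space_nat[OF this] show ?thesis
    unfolding measure_pmf_eq_density by (subst integral_density) auto
qed

lemma sum_pmf_mult_le_mean: "finite A \<Longrightarrow> (\<Sum>x\<in>A. pmf \<mu> x * real x) \<le> mean"
proof -
  have "summable (\<lambda>x. pmf \<mu> x * real x)" "(\<Sum>x. pmf \<mu> x * real x) = mean"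
    using mean_sums by (auto simp: sums_iff)
  then show "finite A \<Longrightarrow> (\<Sum>x\<in>A. pmf \<mu> x * real x) \<le> mean"
    by (metis sum_le_suminf mult_nonneg_nonneg of_nat_0_le_iff pmf_nonneg)
qed

lemma mean_pos: "0 < mean"
  using sum_pmf_mult_le_mean[of "{1}"] pmf_1_pos by simp

lemma one_minus_sum_pmf_eq_prob: "1 - (\<Sum>x=1..i. pmf \<mu> x) = measure_pmf.prob \<mu> {i<..}"
proof -
  have "UNIV - {..i} = {i<..}"
    by auto
  then have "measure_pmf.prob \<mu> {i<..} = 1 - measure_pmf.prob \<mu> {..i}"
    using measure_pmf.prob_compl[of "{..i}" \<mu>] by simp
  also have "measure_pmf.prob \<mu> {..i} = (\<Sum>x=1..i. pmf \<mu> x)"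
    by (simp add: measure_measure_pmf_finite) (rule sum.mono_neutral_right; auto simp: Suc_le_eq)
  finally show ?thesis
    by simp
qed

lemma summable_tails: "summable (\<lambda>i. 1 - (\<Sum>x=1..i. pmf \<mu> x))"
proof (rule bounded_imp_summable)
  show "0 \<le> 1 - (\<Sum>x=1..i. pmf \<mu> x)" for i
    using sum_pmf_le_1[of "{1..i}" \<mu>] by simp
  show "(\<Sum>i\<le>n. 1 - (\<Sum>x=1..i. pmf \<mu> x)) \<le> mean" for n
  proof -
    have "(\<Sum>i\<le>n. 1 - (\<Sum>x=1..i. pmf \<mu> x)) = (\<integral>x. (\<Sum>i\<le>n. indicator {i<..} x) \<partial>\<mu>)"
      by (simp only: one_minus_sum_pmf_eq_prob)
        (subst Bochner_Integration.integral_sum; simp add: less_top[symmetric])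
    also have "\<dots> \<le> (\<integral>x. real x \<partial>\<mu>)"
    proof (rule integral_mono[OF _ integrable_size])
      show "(\<Sum>i\<le>n. indicator {i<..} x) \<le> real x" for x
      proof -
        have "(\<Sum>i\<le>n. indicator {i<..} x :: real) = real (card ({..n} \<inter> {..<x}))"
          by (simp add: indicator_def sum.If_cases Int_def)
        also have "\<dots> \<le> real (card {..<x})"
          by (intro of_nat_mono card_mono) auto
        finally show ?thesis
          by simp
      qed
    qed (auto simp: less_top[symmetric])
    finally show ?thesis .
  qed
qed

lemma composition_sum_pmf_lower_bound:
  obtains c where "0 < c" "\<And>n. c \<le> composition_sum (pmf \<mu>) n"
  using composition_sum_lower_bound[OF pmf_nonneg sum_pmf_le_1 pmf_1_pos summable_tails] by auto

text \<open>The loss \<open>1 - exp (- s x)\<close> is almost \<open>s x\<close> on \<open>{..<N}\<close> once \<open>s N\<close> is small, and the mean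
  truncated at \<open>N\<close> exceeds any fraction \<open>\<theta>' < 1\<close> of the mean for \<open>N\<close> large.\<close>

lemma truncated_laplace_gain:
  assumes "0 < \<theta>" "\<theta> < 1"
  obtains s N where "0 < s" "\<theta> * s * mean \<le> (\<Sum>x<N. pmf \<mu> x * (1 - exp (- s * real x)))"
proof -
  define \<theta>' where "\<theta>' = (1 + \<theta>) / 2"
  have \<theta>': "\<theta> < \<theta>'" "\<theta>' < 1"
    using assms by (auto simp: \<theta>'_def)
  have "\<exists>N. \<theta>' * mean < (\<Sum>x<N. pmf \<mu> x * real x)"
    using order_tendstoD(1)[OF mean_sums[unfolded sums_def], of "\<theta>' * mean"] \<theta>' mean_pos
    by (auto simp: eventually_sequentially)
  then obtain N where N: "\<theta>' * mean \<le> (\<Sum>x<N. pmf \<mu> x * real x)"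
    by (auto intro: less_imp_le)
  define s where "s = (\<theta>' / \<theta> - 1) / (real N + 1)"
  have "1 < \<theta>' / \<theta>"
    using assms \<theta>' by simp
  then have s: "0 < s"
    by (simp add: s_def)
  have "s * real N \<le> s * (real N + 1)"
    using s by simp
  then have sN: "1 + s * real N \<le> \<theta>' / \<theta>"
    by (simp add: s_def)
  have "\<theta> * s * mean \<le> \<theta> * s / \<theta>' * (\<Sum>x<N. pmf \<mu> x * real x)"
    using N assms \<theta>' s by (simp add: field_simps mult_left_mono)
  also have "\<dots> = (\<Sum>x<N. pmf \<mu> x * (\<theta> * s * real x / \<theta>'))"
    by (simp add: sum_distrib_left mult_ac)
  also have "\<dots> \<le> (\<Sum>x<N. pmf \<mu> x * (1 - exp (- s * real x)))"
  proof (intro sum_mono mult_left_mono pmf_nonneg)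
    fix x assume "x \<in> {..<N}"
    then have "s * real x \<le> s * real N"
      using s by (intro mult_left_mono) auto
    then have "1 + s * real x \<le> \<theta>' / \<theta>"
      using sN by linarith
    then have "\<theta> * (1 + s * real x) \<le> \<theta>'"
      using assms by (simp add: pos_le_divide_eq mult.commute)
    then have "\<theta> * (1 + s * real x) * (s * real x) \<le> \<theta>' * (s * real x)"
      using s by (intro mult_right_mono) auto
    moreover have "0 < 1 + s * real x"
      using s by (simp add: add_pos_nonneg)
    ultimately have "\<theta> * s * real x / \<theta>' \<le> s * real x / (1 + s * real x)"
      using \<theta>' assms by (simp add: field_simps)
    also have "\<dots> \<le> 1 - exp (- s * real x)"
      using div_one_plus_le_one_minus_exp[of "s * real x"] s by simp
    finally show "\<theta> * s * real x / \<theta>' \<le> 1 - exp (- s * real x)" .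
  qed
  finally show thesis
    using that s by blast
qed

lemma exp_moment_below_mean:
  assumes "0 < \<theta>" "\<theta> < 1"
  obtains s where "0 < s" "\<And>n. (\<Sum>x=1..n. pmf \<mu> x * exp (- s * real x)) \<le> exp (- \<theta> * s * mean)"
proof -
  obtain s N where s: "0 < s" and gain: "\<theta> * s * mean \<le> (\<Sum>x<N. pmf \<mu> x * (1 - exp (- s * real x)))"
    using truncated_laplace_gain[OF assms] by blast
  show thesis
  proof (rule that[OF s])
    fix n
    define F where "F = {1..n} \<union> {..<N}"
    have "(\<Sum>x=1..n. pmf \<mu> x * exp (- s * real x)) \<le> (\<Sum>x\<in>F. pmf \<mu> x * exp (- s * real x))"
      by (intro sum_mono2) (auto simp: F_def)
    also have "\<dots> = (\<Sum>x\<in>F. pmf \<mu> x) - (\<Sum>x\<in>F. pmf \<mu> x * (1 - exp (- s * real x)))"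
      by (simp add: sum_subtractf algebra_simps)
    also have "\<dots> \<le> 1 - (\<Sum>x<N. pmf \<mu> x * (1 - exp (- s * real x)))"
      using s by (intro diff_mono sum_pmf_le_1 sum_mono2) (auto simp: F_def)
    also have "\<dots> \<le> 1 - \<theta> * s * mean"
      using gain by simp
    also have "\<dots> \<le> exp (- \<theta> * s * mean)"
      using exp_ge_add_one_self[of "- \<theta> * s * mean"] by simp
    finally show "(\<Sum>x=1..n. pmf \<mu> x * exp (- s * real x)) \<le> exp (- \<theta> * s * mean)" .
  qed
qed

lemma exp_moment_truncated_above_mean:
  assumes h: "\<And>x. 0 \<le> h x" "\<And>x. h x \<le> real x" "\<And>x. h x \<le> C" and "1 < \<theta>"
  obtains s where "0 < s" "\<And>n. (\<Sum>x=1..n. pmf \<mu> x * exp (s * h x)) \<le> exp (\<theta> * s * mean)"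
proof
  have C: "0 \<le> C"
    using h(1,3) order_trans by blast
  define s where "s = ln \<theta> / (C + 1)"
  show s: "0 < s"
    using C assms by (simp add: s_def)
  have "s * C \<le> ln \<theta>"
    using C \<open>1 < \<theta>\<close> by (simp add: s_def field_simps)
  then have exp_le: "exp (s * h x) \<le> \<theta>" for x
    using h(3)[of x] s \<open>1 < \<theta>\<close> by (smt (verit) exp_le_cancel_iff exp_ln mult_left_mono)
  fix n
  have "(\<Sum>x=1..n. pmf \<mu> x * exp (s * h x)) \<le> (\<Sum>x=1..n. pmf \<mu> x + \<theta> * s * (pmf \<mu> x * real x))"
  proof (rule sum_mono)
    fix x
    have "exp (s * h x) \<le> 1 + s * h x * exp (s * h x)"
      using exp_minus_one_le_mult_exp[of "s * h x"] by simp
    also have "\<dots> \<le> 1 + s * real x * \<theta>"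
      using h exp_le[of x] s by (intro add_left_mono mult_mono) auto
    finally show "pmf \<mu> x * exp (s * h x) \<le> pmf \<mu> x + \<theta> * s * (pmf \<mu> x * real x)"
      using mult_left_mono[OF _ pmf_nonneg] by (fastforce simp: algebra_simps)
  qed
  also have "\<dots> = (\<Sum>x=1..n. pmf \<mu> x) + \<theta> * s * (\<Sum>x=1..n. pmf \<mu> x * real x)"
    by (simp add: sum.distrib sum_distrib_left)
  also have "\<dots> \<le> 1 + \<theta> * s * mean"
    using s \<open>1 < \<theta>\<close> by (intro add_mono mult_left_mono sum_pmf_le_1 sum_pmf_mult_le_mean) auto
  also have "\<dots> \<le> exp (\<theta> * s * mean)"
    by (rule exp_ge_add_one_self)
  finally show "(\<Sum>x=1..n. pmf \<mu> x * exp (s * h x)) \<le> exp (\<theta> * s * mean)" .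
qed

lemma many_clusters_weight_bound:
  assumes "0 < \<delta>"
  obtains c where "0 < c"
    "\<And>n. compositions_weight \<mu> n (\<lambda>xs. (1 + \<delta>) * real n / mean \<le> real (length xs)) \<le> exp (- (c * real n))"
proof -
  define \<theta> where "\<theta> = (1 + \<delta> / 2) / (1 + \<delta>)"
  have \<theta>: "0 < \<theta>" "\<theta> < 1" "\<theta> * (1 + \<delta>) = 1 + \<delta> / 2"
    using assms by (auto simp: \<theta>_def field_simps)
  obtain s where s: "0 < s" "\<And>n. (\<Sum>x=1..n. pmf \<mu> x * exp (- s * real x)) \<le> exp (- \<theta> * s * mean)"
    using exp_moment_below_mean[OF \<theta>(1,2)] by blast
  define f where "f x = (- s) * real x + \<theta> * s * mean" for x
  have "compositions_weight \<mu> n (\<lambda>xs. (1 + \<delta>) * real n / mean \<le> real (length xs))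
      \<le> exp (- (s * \<delta> / 2 * real n))" for n
    unfolding compositions_weight_def comp_weight_def
  proof (rule composition_sum_chernoff[where f=f])
    have "(\<Sum>x=1..n. pmf \<mu> x * exp (f x)) = exp (\<theta> * s * mean) * (\<Sum>x=1..n. pmf \<mu> x * exp (- s * real x))"
      unfolding f_def exp_add sum_distrib_left by (simp add: mult_ac)
    also have "\<dots> \<le> exp (\<theta> * s * mean) * exp (- \<theta> * s * mean)"
      using s by (intro mult_left_mono) auto
    finally show "(\<Sum>x=1..n. pmf \<mu> x * exp (f x)) \<le> 1"
      by (simp add: exp_minus)
  next
    fix xs assume "xs \<in> compositions n" and many: "(1 + \<delta>) * real n / mean \<le> real (length xs)"
    then have "sum_list (map f xs) = \<theta> * s * mean * real (length xs) - s * real n"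
      unfolding f_def sum_list_map_affine by (simp add: compositions_def sum_list_of_nat)
    moreover have "(1 + \<delta>) * real n \<le> mean * real (length xs)"
      using many mean_pos by (simp add: field_simps)
    then have "\<theta> * ((1 + \<delta>) * real n) \<le> \<theta> * (mean * real (length xs))"
      using \<theta> by (intro mult_left_mono) auto
    then have "(1 + \<delta> / 2) * real n \<le> \<theta> * mean * real (length xs)"
      by (simp only: \<theta>(3)[symmetric] mult.assoc)
    then have "s * ((1 + \<delta> / 2) * real n) \<le> s * (\<theta> * mean * real (length xs))"
      using s by (intro mult_left_mono) auto
    ultimately show "s * \<delta> / 2 * real n \<le> sum_list (map f xs)"
      by (simp add: algebra_simps)
  qed (rule pmf_nonneg)
  moreover have "0 < s * \<delta> / 2"
    using s assms by simp
  ultimately show thesis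
    using that by blast
qed

lemma many_clusters_negligible:
  assumes "0 < \<delta>"
  shows "(\<lambda>n. compositions_weight \<mu> n (\<lambda>xs. (1 + \<delta>) * real n / mean \<le> real (length xs))) \<longlonglongrightarrow> 0"
proof -
  obtain c where "0 < c"
    "\<And>n. compositions_weight \<mu> n (\<lambda>xs. (1 + \<delta>) * real n / mean \<le> real (length xs)) \<le> exp (- (c * real n))"
    using many_clusters_weight_bound[OF assms] by blast
  then show ?thesis
    by (intro tendsto_sandwich[OF _ _ tendsto_const LIMSEQ_exp_neg_mult[of c]])
      (auto intro: always_eventually compositions_weight_nonneg)
qed

lemma light_parts_weight_bound:
  assumes h: "\<And>x. 0 \<le> h x" "\<And>x. h x \<le> real x" "\<And>x. h x \<le> C" and "0 < \<delta>"
  obtains c where "0 < c" "\<And>n. compositions_weight \<mu> n (\<lambda>xs. real (length xs) \<le> (1 - \<delta>) * real n / mean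
      \<and> (1 - \<delta> / 4) * real n \<le> sum_list (map h xs)) \<le> exp (- (c * real n))"
proof -
  define \<gamma> where "\<gamma> = \<delta> / 4"
  obtain s where s: "0 < s" "\<And>n. (\<Sum>x=1..n. pmf \<mu> x * exp (s * h x)) \<le> exp ((1 + \<gamma>) * s * mean)"
    using exp_moment_truncated_above_mean[OF h, of "1 + \<gamma>"] assms by (auto simp: \<gamma>_def)
  define f where "f x = s * h x + - ((1 + \<gamma>) * s * mean)" for x
  have "compositions_weight \<mu> n (\<lambda>xs. real (length xs) \<le> (1 - \<delta>) * real n / mean
      \<and> (1 - \<gamma>) * real n \<le> sum_list (map h xs)) \<le> exp (- (s * \<delta> / 2 * real n))" for n
    unfolding compositions_weight_def comp_weight_def
  proof (rule composition_sum_chernoff[where f=f])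
    have "(\<Sum>x=1..n. pmf \<mu> x * exp (f x))
        = exp (- ((1 + \<gamma>) * s * mean)) * (\<Sum>x=1..n. pmf \<mu> x * exp (s * h x))"
      unfolding f_def exp_add sum_distrib_left by (simp add: mult_ac)
    also have "\<dots> \<le> exp (- ((1 + \<gamma>) * s * mean)) * exp ((1 + \<gamma>) * s * mean)"
      using s by (intro mult_left_mono) auto
    finally show "(\<Sum>x=1..n. pmf \<mu> x * exp (f x)) \<le> 1"
      by (simp add: exp_minus)
  next
    fix xs assume "real (length xs) \<le> (1 - \<delta>) * real n / mean \<and> (1 - \<gamma>) * real n \<le> sum_list (map h xs)"
    then have k: "mean * real (length xs) \<le> (1 - \<delta>) * real n" and H: "(1 - \<gamma>) * real n \<le> sum_list (map h xs)"
      using mean_pos by (auto simp: field_simps)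
    have "sum_list (map f xs) = s * sum_list (map h xs) - (1 + \<gamma>) * s * (mean * real (length xs))"
      unfolding f_def sum_list_map_affine by (simp add: algebra_simps)
    also have "\<dots> \<ge> s * ((1 - \<gamma>) * real n) - (1 + \<gamma>) * s * ((1 - \<delta>) * real n)"
      using k H s assms by (intro diff_mono mult_left_mono) (auto simp: \<gamma>_def)
    also have "s * ((1 - \<gamma>) * real n) - (1 + \<gamma>) * s * ((1 - \<delta>) * real n)
        = s * real n * (\<delta> / 2 + \<delta> * \<delta> / 4)"
      by (simp add: \<gamma>_def field_simps)
    also have "\<dots> \<ge> s * real n * (\<delta> / 2)"
      using s assms by (intro mult_left_mono) auto
    finally show "s * \<delta> / 2 * real n \<le> sum_list (map f xs)"
      by (simp add: mult_ac)
  qed (rule pmf_nonneg)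
  moreover have "0 < s * \<delta> / 2"
    using s assms by simp
  ultimately show thesis
    using that[of "s * \<delta> / 2"] unfolding \<gamma>_def by blast
qed

lemma mean_tail_small:
  assumes "0 < \<beta>"
  obtains M where "\<And>A. finite A \<Longrightarrow> (\<Sum>x\<in>A - {..<M}. pmf \<mu> x * real x) \<le> \<beta>"
proof -
  have "\<exists>M. mean - \<beta> < (\<Sum>x<M. pmf \<mu> x * real x)"
    using order_tendstoD(1)[OF mean_sums[unfolded sums_def], of "mean - \<beta>"] assms
    by (auto simp: eventually_sequentially)
  then obtain M where M: "mean - \<beta> < (\<Sum>x<M. pmf \<mu> x * real x)" ..
  show thesis
  proof (rule that)
    fix A :: "nat set" assume "finite A"
    then have "(\<Sum>x\<in>A - {..<M}. pmf \<mu> x * real x) + (\<Sum>x<M. pmf \<mu> x * real x)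
        = (\<Sum>x\<in>(A - {..<M}) \<union> {..<M}. pmf \<mu> x * real x)"
      by (intro sum.union_disjoint[symmetric]) auto
    also have "\<dots> \<le> mean"
      using \<open>finite A\<close> by (intro sum_pmf_mult_le_mean) simp
    finally show "(\<Sum>x\<in>A - {..<M}. pmf \<mu> x * real x) \<le> \<beta>"
      using M by linarith
  qed
qed

lemma heavy_parts_weight_small:
  assumes "0 < \<gamma>" "0 < \<eta>"
  obtains M where "\<And>n. 0 < n \<Longrightarrow>
    compositions_weight \<mu> n (\<lambda>xs. \<gamma> * real n \<le> sum_list (map (\<lambda>x. if x < M then 0 else real x) xs)) \<le> \<eta>"
proof -
  define \<beta> where "\<beta> = \<gamma> * \<eta> / exp 1"
  have \<beta>: "0 < \<beta>"
    using assms by (simp add: \<beta>_def)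
  obtain M where M: "\<And>A. finite A \<Longrightarrow> (\<Sum>x\<in>A - {..<M}. pmf \<mu> x * real x) \<le> \<beta>"
    using mean_tail_small[OF \<beta>] by blast
  have "\<eta> * exp 1 \<le> \<eta> * (\<eta> + exp 1)"
    using assms by (intro mult_left_mono) auto
  then have "exp 1 / (1 + \<gamma> / \<beta>) \<le> \<eta>"
    using assms by (simp add: \<beta>_def field_simps add_pos_pos)
  moreover have "compositions_weight \<mu> n (\<lambda>xs. \<gamma> * real n \<le> sum_list (map (\<lambda>x. if x < M then 0 else real x) xs))
      \<le> exp 1 / (1 + \<gamma> / \<beta>)" if "0 < n" for n
    unfolding compositions_weight_def comp_weight_def
  proof (rule composition_sum_large_parts[OF pmf_nonneg sum_pmf_le_1 _ _ \<beta> _ that])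
    have "(\<Sum>x=1..n. pmf \<mu> x * (if x < M then 0 else real x)) = (\<Sum>x\<in>{1..n} - {..<M}. pmf \<mu> x * real x)"
      by (rule sum.mono_neutral_cong_right) auto
    also have "\<dots> \<le> \<beta>"
      by (rule M) simp
    finally show "(\<Sum>x=1..n. pmf \<mu> x * (if x < M then 0 else real x)) \<le> \<beta>" .
  qed (use assms in auto)
  ultimately show thesis
    using that order_trans by blast
qed

text \<open>A composition of \<open>n\<close> has either total size at least \<open>(1 - \<delta>/4) n\<close> in parts below a level \<open>M\<close>,
  or at least \<open>\<delta> n / 4\<close> in parts of size at least \<open>M\<close>.\<close>

lemma few_clusters_weight_bound:
  assumes "0 < \<delta>" "0 < \<eta>"
  obtains c where "0 < c" "\<And>n. 0 < n \<Longrightarrow>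
    compositions_weight \<mu> n (\<lambda>xs. real (length xs) \<le> (1 - \<delta>) * real n / mean) \<le> exp (- (c * real n)) + \<eta>"
proof -
  obtain M where M: "\<And>n. 0 < n \<Longrightarrow> compositions_weight \<mu> n
      (\<lambda>xs. \<delta> / 4 * real n \<le> sum_list (map (\<lambda>x. if x < M then 0 else real x) xs)) \<le> \<eta>"
    using heavy_parts_weight_small[of "\<delta> / 4" \<eta>] assms by auto
  define h where "h x = (if x < M then real x else 0)" for x
  obtain c where c: "0 < c" "\<And>n. compositions_weight \<mu> n (\<lambda>xs. real (length xs) \<le> (1 - \<delta>) * real n / mean
      \<and> (1 - \<delta> / 4) * real n \<le> sum_list (map h xs)) \<le> exp (- (c * real n))"
  proof (rule light_parts_weight_bound)
    show "0 \<le> h x" "h x \<le> real x" "h x \<le> real M" for x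
      by (auto simp: h_def)
  qed (use assms in auto)
  have "compositions_weight \<mu> n (\<lambda>xs. real (length xs) \<le> (1 - \<delta>) * real n / mean) \<le> exp (- (c * real n)) + \<eta>"
    if "0 < n" for n
  proof (rule order_trans[OF compositions_weight_le_add add_mono[OF c(2) M[OF that]]])
    fix xs assume "xs \<in> compositions n"
    then have "sum_list (map h xs) + sum_list (map (\<lambda>x. if x < M then 0 else real x) xs) = real n"
      by (simp add: sum_list_addf[symmetric] h_def compositions_def sum_list_of_nat if_distrib cong: if_cong)
    then show "real (length xs) \<le> (1 - \<delta>) * real n / mean \<Longrightarrow>
        (real (length xs) \<le> (1 - \<delta>) * real n / mean \<and> (1 - \<delta> / 4) * real n \<le> sum_list (map h xs))
        \<or> \<delta> / 4 * real n \<le> sum_list (map (\<lambda>x. if x < M then 0 else real x) xs)"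
      by (auto simp: algebra_simps)
  qed
  with c(1) show thesis
    using that by blast
qed

lemma few_clusters_negligible:
  assumes "0 < \<delta>"
  shows "(\<lambda>n. compositions_weight \<mu> n (\<lambda>xs. real (length xs) \<le> (1 - \<delta>) * real n / mean)) \<longlonglongrightarrow> 0"
proof (rule order_tendstoI)
  fix a :: real assume "a < 0"
  then show "\<forall>\<^sub>F n in sequentially.
      a < compositions_weight \<mu> n (\<lambda>xs. real (length xs) \<le> (1 - \<delta>) * real n / mean)"
    by (intro always_eventually allI less_le_trans[OF _ compositions_weight_nonneg])
next
  fix \<eta> :: real assume "0 < \<eta>"
  then obtain c where c: "0 < c" "\<And>n. 0 < n \<Longrightarrow>
      compositions_weight \<mu> n (\<lambda>xs. real (length xs) \<le> (1 - \<delta>) * real n / mean) \<le> exp (- (c * real n)) + \<eta> / 2"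
    using few_clusters_weight_bound[OF assms, of "\<eta> / 2"] by auto
  have "\<forall>\<^sub>F n in sequentially. exp (- (c * real n)) < \<eta> / 2"
    using order_tendstoD(2)[OF LIMSEQ_exp_neg_mult[OF c(1)], of "\<eta> / 2"] \<open>0 < \<eta>\<close> by simp
  then show "\<forall>\<^sub>F n in sequentially.
      compositions_weight \<mu> n (\<lambda>xs. real (length xs) \<le> (1 - \<delta>) * real n / mean) < \<eta>"
    using eventually_gt_at_top[of 0]
  proof eventually_elim
    case (elim n)
    then show ?case
      using c(2)[of n] by linarith
  qed
qed

lemma prob_ESC_far_from_mean_le:
  assumes "0 < n" "0 < c" "\<And>n. c \<le> composition_sum (pmf \<mu>) n"
  shows "measure_pmf.prob (ESC \<mu> n) {P. \<epsilon> < \<bar>real (card P) / real n - 1 / mean\<bar>}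
    \<le> (compositions_weight \<mu> n (\<lambda>xs. (1 + \<epsilon> * mean) * real n / mean \<le> real (length xs))
        + compositions_weight \<mu> n (\<lambda>xs. real (length xs) \<le> (1 - \<epsilon> * mean) * real n / mean)) / c"
    (is "_ \<le> (?many + ?few) / c")
proof -
  have u: "0 < composition_sum (pmf \<mu>) n"
    using assms less_le_trans by blast
  have "compositions_weight \<mu> n (\<lambda>xs. \<epsilon> < \<bar>real (length xs) / real n - 1 / mean\<bar>) \<le> ?many + ?few"
    using far_from_mean_cases[OF mean_pos] assms by (intro compositions_weight_le_add) simp
  then have "measure_pmf.prob (ESC \<mu> n) {P. \<epsilon> < \<bar>real (card P) / real n - 1 / mean\<bar>}
      \<le> (?many + ?few) / composition_sum (pmf \<mu>) n"
    using prob_ESC_card[OF u, of "\<lambda>k. \<epsilon> < \<bar>real k / real n - 1 / mean\<bar>"] u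
    by (simp add: divide_right_mono)
  also have "\<dots> \<le> (?many + ?few) / c"
    using assms by (intro divide_left_mono add_nonneg_nonneg compositions_weight_nonneg mult_pos_pos u)
  finally show ?thesis .
qed

end

theorem theorem1:
  fixes \<mu> :: "nat pmf"
  assumes "0 \<notin> set_pmf \<mu>"
    and "pmf \<mu> 1 > 0"
    and "integrable (measure_pmf \<mu>) real"
  shows "\<forall>\<epsilon>>0. (\<lambda>n. measure_pmf.prob (ESC \<mu> n)
            {P. \<bar>real (card P) / real n - 1 / measure_pmf.expectation \<mu> real\<bar> > \<epsilon>})
          \<longlonglongrightarrow> 0"
proof (intro allI impI)
  interpret cluster_size_law \<mu>
    using assms by unfold_locales
  fix \<epsilon> :: real assume "0 < \<epsilon>"
  then have \<delta>: "0 < \<epsilon> * mean"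
    using mean_pos by simp
  obtain c where c: "0 < c" "\<And>n. c \<le> composition_sum (pmf \<mu>) n"
    using composition_sum_pmf_lower_bound by blast
  let ?many = "\<lambda>n. compositions_weight \<mu> n (\<lambda>xs. (1 + \<epsilon> * mean) * real n / mean \<le> real (length xs))"
  let ?few = "\<lambda>n. compositions_weight \<mu> n (\<lambda>xs. real (length xs) \<le> (1 - \<epsilon> * mean) * real n / mean)"
  have lim: "(\<lambda>n. (?many n + ?few n) / c) \<longlonglongrightarrow> 0"
    using tendsto_add[OF many_clusters_negligible[OF \<delta>] few_clusters_negligible[OF \<delta>]]
      tendsto_divide_zero by fastforce
  have "\<forall>\<^sub>F n in sequentially. measure_pmf.prob (ESC \<mu> n)
      {P. \<epsilon> < \<bar>real (card P) / real n - 1 / mean\<bar>} \<le> (?many n + ?few n) / c"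
    using eventually_gt_at_top[of 0] by eventually_elim (rule prob_ESC_far_from_mean_le[OF _ c])
  then show "(\<lambda>n. measure_pmf.prob (ESC \<mu> n)
      {P. \<bar>real (card P) / real n - 1 / measure_pmf.expectation \<mu> real\<bar> > \<epsilon>}) \<longlonglongrightarrow> 0"
    by (intro tendsto_sandwich[OF _ _ tendsto_const lim]) auto
qed

end
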